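(* Let $\mathcal{K}$ be a discrete index set and, for each $k\in\mathcal{K}$, let $\Theta_k\subseteq\mathbb{R}^{n_k}$. Let $\pi$ be a probability distribution on $\mathcal{X}=\bigcup_{k\in\mathcal{K}}(\{k\}\times\Theta_k)$ with density $\pi(\mathbf{x})=\pi(k)\pi_k(\boldsymbol\theta_k)$ for $\mathbf{x}=(k,\boldsymbol\theta_k)$, where $\pi(k)$ is the marginal probability of $k$ and $\pi_k$ is the conditional density on $\Theta_k$. Let $\nu$ be a univariate reference distribution with density, write $\nu_n:=\otimes_n\nu$ (and also $\nu_n(\cdot)$ for its density, with $\nu_0(\cdot)\equiv 1$), and let $\{j_k\}_{k\in\mathcal{K}}$ be discrete model-jump distributions on $\mathcal{K}$. For each $k$ let $T_k:\mathbb{R}^{n_k}\to\mathbb{R}^{n_k}$ be a diffeomorphism (on the relevant supports), and suppose that $T_k\sharp\pi_k=\otimes_{n_k}\nu$ for every $k\in\mathcal{K}$. Suppose RJMCMC across-model proposals from $\mathbf{x}=(k,\boldsymbol\theta_k)$ to $\mathbf{x}'=(k',\boldsymbol\theta'_{k'})$ with $k'\sim j_k$ are constructed as follows, where for each pair with $n_{k'}\ge n_k$, setting $w_k=n_{k'}-n_k$, $\bar h_{k,k'}:\mathbb{R}^{n_k}\times\mathbb{R}^{w_k}\to\mathbb{R}^{n_{k'}}$ is a volume-preserving diffeomorphism (absolute Jacobian determinant identically $1$) satisfying $\bar h_{k,k'}\sharp\otimes_{n_{k'}}\nu=\otimes_{n_{k'}}\nu$: (i) if $n_{k'}\ge n_k$: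 $\mathbf{z}_k=T_k(\boldsymbol\theta_k)$, draw $\mathbf{u}_k\sim\nu_{w_k}$, set $\mathbf{z}_{k'}=\bar h_{k,k'}(\mathbf{z}_k,\mathbf{u}_k)$ and $\boldsymbol\theta'_{k'}=T_{k'}^{-1}(\mathbf{z}_{k'})$; (ii) if $n_{k'}<n_k$: $\mathbf{z}_k=T_k(\boldsymbol\theta_k)$, set $(\mathbf{z}_{k'},\mathbf{u}_{k'})=\bar h_{k',k}^{-1}(\mathbf{z}_k)$ (the auxiliary part $\mathbf{u}_{k'}\in\mathbb{R}^{n_k-n_{k'}}$ is discarded) and $\boldsymbol\theta'_{k'}=T_{k'}^{-1}(\mathbf{z}_{k'})$. Writing $h_{k,k'}$ for the resulting diffeomorphism $(\boldsymbol\theta_k,\mathbf{u}_k)\mapsto(\boldsymbol\theta'_{k'},\mathbf{u}_{k'})$ (with empty auxiliary vectors where appropriate), the RJMCMC acceptance probability $$\alpha(\mathbf{x},\mathbf{x}')=1\wedge\frac{\pi(\mathbf{x}')\,j_{k'}(k)\,g_{k',k}(\mathbf{u}_{k'})}{\pi(\mathbf{x})\,j_k(k')\,g_{k,k'}(\mathbf{u}_k)}\,\big|J_{h_{k,k'}}(\boldsymbol\theta_k,\mathbf{u}_k)\big|,$$ where $g_{k,k'}=\nu_{w_k}$ is the density of the auxiliary variables drawn in the forward move and $g_{k',k}$ that of the reverse move (equal to $1$ when the corresponding auxiliary vector is empty), reduces to $$\alpha(\mathbf{x},\mathbf{x}')=1\wedge\frac{\pi(k')}{\pi(k)}\frac{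j_{k'}(k)}{j_k(k')}.$$
   Context: For a map $T$ and distribution $\mu$, $T\sharp\mu$ denotes the pushforward (the law of $T(\mathbf{Z})$ for $\mathbf{Z}\sim\mu$). $\otimes_n\nu$ denotes the $n$-fold product of $\nu$. $|J_f(\cdot)|$ denotes the absolute value of the Jacobian determinant of $f$. $j_k(k')$ is the probability of proposing model $k'$ from model $k$, and $\wedge$ denotes minimum. *)

theory Defs
  imports "HOL-Analysis.Analysis" "HOL-Probability.Probability"
begin

definition prod_dens :: "(real \<Rightarrow> real) \<Rightarrow> real^'n::finite \<Rightarrow> real" where
  "prod_dens f v = (\<Prod>i\<in>UNIV. f (v $ i))"

text \<open>A pair (z, u) in R^{n_k} x R^{w} is encoded as a single vector of
  R^{n_{k'}} (index type 'm) via an injection e of the index type 'n into 'm: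
  the coordinates in range e carry z, the remaining w coordinates carry u.\<close>
definition main_coords :: "('n \<Rightarrow> 'm) \<Rightarrow> real^'m::finite \<Rightarrow> real^'n::finite" where
  "main_coords e y = (\<chi> a. y $ e a)"

definition join_coords :: "('n::finite \<Rightarrow> 'm::finite) \<Rightarrow> real^'n \<Rightarrow> real^'m \<Rightarrow> real^'m" where
  "join_coords e z y = (\<chi> i. if i \<in> range e then z $ inv e i else y $ i)"

text \<open>Density of the auxiliary vector u (the coordinates outside range e):
  the (n_{k'} - n_k)-fold product of f; empty product = 1.\<close>
definition aux_dens :: "(real \<Rightarrow> real) \<Rightarrow> ('n::finite \<Rightarrow> 'm::finite) \<Rightarrow> real^'m \<Rightarrow> real" where
  "aux_dens f e y = (\<Prod>i\<in>UNIV - range e. f (y $ i))"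

definition abs_jac :: "(real^'n::finite \<Rightarrow> real^'n) \<Rightarrow> real^'n \<Rightarrow> real" where
  "abs_jac f x = \<bar>det (matrix (frechet_derivative f (at x)))\<bar>"

definition diffeo_between :: "(real^'n::finite) set \<Rightarrow> (real^'n) set \<Rightarrow> (real^'n \<Rightarrow> real^'n) \<Rightarrow> bool" where
  "diffeo_between U V f \<longleftrightarrow>
     open U \<and> open V \<and> bij_betw f U V \<and>
     (\<forall>x\<in>U. f differentiable (at x)) \<and>
     continuous_on U (\<lambda>x. matrix (frechet_derivative f (at x))) \<and>
     (\<forall>y\<in>V. the_inv_into U f differentiable (at y)) \<and>
     continuous_on V (\<lambda>y. matrix (frechet_derivative (the_inv_into U f) (at y)))"

definition fwd_map ::
  "('n::finite \<Rightarrow> 'm::finite) \<Rightarrow> (real^'n \<Rightarrow> real^'n) \<Rightarrow> (real^'m) set \<Rightarrow> (real^'m \<Rightarrow> real^'m)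
     \<Rightarrow> (real^'m \<Rightarrow> real^'m) \<Rightarrow> real^'m \<Rightarrow> real^'m" where
  "fwd_map e T U' T' hbar y =
     the_inv_into U' T' (hbar (join_coords e (T (main_coords e y)) y))"

definition rev_map ::
  "('n::finite \<Rightarrow> 'm::finite) \<Rightarrow> (real^'n) set \<Rightarrow> (real^'n \<Rightarrow> real^'n) \<Rightarrow> (real^'m \<Rightarrow> real^'m)
     \<Rightarrow> (real^'m \<Rightarrow> real^'m) \<Rightarrow> real^'m \<Rightarrow> real^'m" where
  "rev_map e U T T' hbar th' =
     (let y = inv hbar (T' th') in join_coords e (the_inv_into U T (main_coords e y)) y)"

definition rj_accept :: "real \<Rightarrow> real \<Rightarrow> real \<Rightarrow> real \<Rightarrow> real \<Rightarrow> real \<Rightarrow> real \<Rightarrow> real" where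
  "rj_accept pix pix' jfwd jrev gfwd grev J =
     min 1 ((pix' * jrev * grev) / (pix * jfwd * gfwd) * J)"

end

(* The Jacobian of the proposal exactly compensates the density ratio. Since T_k pushes pi_k to
   the product reference density, the change-of-variables formula gives
   pi_k(theta) = nu_n(T_k theta) |J_{T_k}(theta)| almost everywhere on the support, and likewise for
   k'. The product density splits as nu_{n'}(z, u) = nu_n(z) nu_w(u), and since hbar is
   volume-preserving and preserves nu_{n'}, also nu_{n'} o hbar = nu_{n'} almost everywhere.
   Chaining these identities along h_{k,k'} = T_{k'}^-1 o hbar o (T_k x id) yields
   pi_{k'}(h(theta, u)) |J_h(theta, u)| = pi_k(theta) nu_w(u) almost surely for the proposal, so every
   density and Jacobian factor cancels in the acceptance ratio; the reverse move is symmetric.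
   Because densities are determined only almost everywhere, each identity is transported along the
   maps using that differentiable maps send null sets to null sets. *)

theory Submission
  imports Defs
begin

section \<open>Embedding a square matrix as a diagonal block\<close>

definition embed_perm :: "('n \<Rightarrow> 'm) \<Rightarrow> ('n \<Rightarrow> 'n) \<Rightarrow> 'm \<Rightarrow> 'm" where
  "embed_perm e q i = (if i \<in> range e then e (q (inv e i)) else i)"

definition embed_matrix :: "('n::finite \<Rightarrow> 'm::finite) \<Rightarrow> 'a::zero_neq_one^'n^'n \<Rightarrow> 'a^'m^'m" where
  "embed_matrix e A = (\<chi> i j. if i \<in> range e then (if j \<in> range e then A $ inv e i $ inv e j else 0)
                             else (if i = j then 1 else 0))"

lemma embed_perm_permutes_sign:
  fixes e :: "'n::finite \<Rightarrow> 'm::finite"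
  assumes e: "inj e" and q: "q permutes (UNIV :: 'n set)"
  shows "embed_perm e q permutes (UNIV :: 'm set) \<and> sign (embed_perm e q) = sign q"
  using q finite_class.finite_UNIV[where 'a='n]
proof (induction rule: permutes_induct)
  case id
  have "embed_perm e id = id"
    using e by (auto simp: embed_perm_def fun_eq_iff f_inv_into_f)
  then show ?case by (metis permutes_id sign_id)
next
  case (swap a b p)
  have swap_comm: "embed_perm e (Transposition.transpose a b \<circ> p)
      = Transposition.transpose (e a) (e b) \<circ> embed_perm e p"
    using e by (auto simp: embed_perm_def fun_eq_iff Transposition.transpose_def inj_eq)
  have ea: "e a \<noteq> e b" using swap e by (auto simp: inj_eq)
  have pm: "permutation (embed_perm e p)" and pp: "permutation p"
    using swap by (auto simp: permutation_permutes)
  have "Transposition.transpose (e a) (e b) \<circ> embed_perm e p permutes UNIV"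
    using swap by (intro permutes_compose permutes_swap_id) auto
  moreover have "sign (Transposition.transpose (e a) (e b) \<circ> embed_perm e p) = - sign (embed_perm e p)"
    using ea by (simp add: sign_compose[OF permutation_swap_id pm] sign_swap_id)
  moreover have "sign (Transposition.transpose a b \<circ> p) = - sign p"
    using swap by (simp add: sign_compose[OF permutation_swap_id pp] sign_swap_id)
  ultimately have "embed_perm e (Transposition.transpose a b \<circ> p) permutes UNIV \<and>
      sign (embed_perm e (Transposition.transpose a b \<circ> p)) = sign (Transposition.transpose a b \<circ> p)"
    unfolding swap_comm using swap.IH by metis
  then show ?case by (simp add: comp_def)
qed

lemma prod_embed_matrix_eq_zero:
  fixes A :: "'a::comm_ring_1^'n::finite^'n" and e :: "'n \<Rightarrow> 'm::finite"
  assumes e: "inj e" and p: "p permutes (UNIV :: 'm set)"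
    and not_embedded: "p \<notin> embed_perm e ` {q. q permutes (UNIV :: 'n set)}"
  shows "(\<Prod>i\<in>UNIV. embed_matrix e A $ i $ p i) = 0"
proof (rule ccontr)
  assume nonzero: "(\<Prod>i\<in>UNIV. embed_matrix e A $ i $ p i) \<noteq> 0"
  have nz: "embed_matrix e A $ i $ p i \<noteq> 0" for i
    using nonzero prod_zero[of UNIV "\<lambda>i. embed_matrix e A $ i $ p i"] by auto
  have fixed: "p i = i" if "i \<notin> range e" for i
    using nz[of i] that by (auto simp: embed_matrix_def split: if_splits)
  have in_range: "p i \<in> range e" if "i \<in> range e" for i
    using nz[of i] that by (auto simp: embed_matrix_def split: if_splits)
  define q where "q a = inv e (p (e a))" for a
  have "inj q"
  proof (rule injI)
    fix a b assume "q a = q b"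
    then have "p (e a) = p (e b)"
      unfolding q_def using in_range by (metis f_inv_into_f rangeI)
    then show "a = b" using p e by (metis permutes_inj inj_eq)
  qed
  then have "q permutes UNIV"
    by (intro bij_imp_permutes) (auto simp: bij_def finite_UNIV_inj_surj)
  moreover have "embed_perm e q = p"
  proof
    fix i show "embed_perm e q i = p i"
      using fixed in_range by (cases "i \<in> range e") (auto simp: embed_perm_def q_def f_inv_into_f)
  qed
  ultimately show False using not_embedded by auto
qed

lemma prod_embed_matrix_embed_perm:
  fixes A :: "'a::comm_ring_1^'n::finite^'n" and e :: "'n \<Rightarrow> 'm::finite"
  assumes e: "inj e"
  shows "(\<Prod>i\<in>UNIV. embed_matrix e A $ i $ embed_perm e q i) = (\<Prod>a\<in>UNIV. A $ a $ q a)"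
proof -
  have "(\<Prod>i\<in>UNIV. embed_matrix e A $ i $ embed_perm e q i)
      = (\<Prod>i\<in>range e. embed_matrix e A $ i $ embed_perm e q i)
        * (\<Prod>i\<in>UNIV - range e. embed_matrix e A $ i $ embed_perm e q i)"
    by (subst prod.subset_diff[of "range e"]) (auto simp: mult.commute)
  also have "(\<Prod>i\<in>UNIV - range e. embed_matrix e A $ i $ embed_perm e q i) = 1"
    by (intro prod.neutral) (auto simp: embed_matrix_def embed_perm_def)
  also have "(\<Prod>i\<in>range e. embed_matrix e A $ i $ embed_perm e q i) = (\<Prod>a\<in>UNIV. A $ a $ q a)"
    using e by (simp add: prod.reindex embed_matrix_def embed_perm_def)
  finally show ?thesis by simp
qed

lemma det_embed_matrix:
  fixes A :: "'a::comm_ring_1^'n::finite^'n" and e :: "'n \<Rightarrow> 'm::finite"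
  assumes e: "inj e"
  shows "det (embed_matrix e A) = det A"
proof -
  let ?P = "{p. p permutes (UNIV :: 'm set)}" and ?Q = "{q. q permutes (UNIV :: 'n set)}"
  let ?t = "\<lambda>p. of_int (sign p) * (\<Prod>i\<in>UNIV. embed_matrix e A $ i $ p i)"
  have inj_embed: "inj_on (embed_perm e) ?Q"
  proof (rule inj_onI)
    fix q q' assume "embed_perm e q = embed_perm e q'"
    then have "\<And>a. embed_perm e q (e a) = embed_perm e q' (e a)" by simp
    then show "q = q'" using e by (auto simp: embed_perm_def fun_eq_iff inj_eq)
  qed
  have "det (embed_matrix e A) = sum ?t ?P" unfolding det_def by simp
  also have "\<dots> = sum ?t (embed_perm e ` ?Q)"
    using embed_perm_permutes_sign[OF e]
    by (intro sum.mono_neutral_right) (auto simp: prod_embed_matrix_eq_zero[OF e])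
  also have "\<dots> = sum (?t \<circ> embed_perm e) ?Q" using inj_embed by (rule sum.reindex)
  also have "\<dots> = det A"
    unfolding det_def using embed_perm_permutes_sign[OF e]
    by (intro sum.cong) (auto simp: prod_embed_matrix_embed_perm[OF e])
  finally show ?thesis .
qed

section \<open>Change of variables over an arbitrary finite index type\<close>

(* The change-of-variables theorem of HOL-Analysis requires a well-ordered index type. Every finite
   type is in bijection with a well-ordered copy of itself (ordered through to_nat), and relabelling
   coordinates along this bijection preserves Lebesgue measure and absolute Jacobian determinants. *)

typedef 'a wellorder_copy = "UNIV :: 'a set" by simp

instantiation wellorder_copy :: (finite) linorder
begin
definition less_eq_wellorder_copy :: "'a wellorder_copy \<Rightarrow> 'a wellorder_copy \<Rightarrow> bool" where
  "x \<le> y \<longleftrightarrow> to_nat (Rep_wellorder_copy x) \<le> to_nat (Rep_wellorder_copy y)"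
definition less_wellorder_copy :: "'a wellorder_copy \<Rightarrow> 'a wellorder_copy \<Rightarrow> bool" where
  "x < y \<longleftrightarrow> to_nat (Rep_wellorder_copy x) < to_nat (Rep_wellorder_copy y)"
instance
  by standard (auto simp: less_eq_wellorder_copy_def less_wellorder_copy_def Rep_wellorder_copy_inject)
end

instance wellorder_copy :: (finite) finite
proof
  have "(UNIV :: 'a wellorder_copy set) = Abs_wellorder_copy ` UNIV"
    by (metis Rep_wellorder_copy_inverse surj_def)
  moreover have "finite (Abs_wellorder_copy ` (UNIV :: 'a set))" by simp
  ultimately show "finite (UNIV :: 'a wellorder_copy set)" by simp
qed

instance wellorder_copy :: (finite) wellorder
proof -
  have "wf {(x :: 'a wellorder_copy, y). x < y}"
    by (rule wf_subset[OF wf_measure[of "\<lambda>x. to_nat (Rep_wellorder_copy x)"]])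
       (auto simp: less_wellorder_copy_def)
  then show "OFCLASS('a wellorder_copy, wellorder_class)" by (rule wf_wellorderI) intro_classes
qed

lemma bij_Abs_wellorder_copy: "bij Abs_wellorder_copy"
  by (metis Abs_wellorder_copy_inverse Rep_wellorder_copy_inverse UNIV_I bij_betw_def inj_on_def surj_def)

definition vec_to_copy :: "real^'a \<Rightarrow> real^'a wellorder_copy" where
  "vec_to_copy x = (\<chi> i. x $ Rep_wellorder_copy i)"

definition vec_of_copy :: "real^'a wellorder_copy \<Rightarrow> real^'a" where
  "vec_of_copy y = (\<chi> a. y $ Abs_wellorder_copy a)"

lemma vec_of_to_copy [simp]: "vec_of_copy (vec_to_copy x) = x"
  by (simp add: vec_of_copy_def vec_to_copy_def Abs_wellorder_copy_inverse vec_eq_iff)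

lemma vec_to_of_copy [simp]: "vec_to_copy (vec_of_copy y) = y"
  by (simp add: vec_of_copy_def vec_to_copy_def Rep_wellorder_copy_inverse vec_eq_iff)

lemma linear_vec_to_copy: "linear vec_to_copy"
  by (auto simp: linear_iff vec_to_copy_def vec_eq_iff)

lemma linear_vec_of_copy: "linear vec_of_copy"
  by (auto simp: linear_iff vec_of_copy_def vec_eq_iff)

lemma borel_measurable_vec_to_copy [measurable]: "vec_to_copy \<in> borel_measurable borel"
  unfolding vec_to_copy_def by (intro borel_measurable_continuous_onI continuous_intros)

lemma borel_measurable_vec_of_copy [measurable]: "vec_of_copy \<in> borel_measurable borel"
  unfolding vec_of_copy_def by (intro borel_measurable_continuous_onI continuous_intros)

lemma prod_Basis_vec: "(\<Prod>b\<in>Basis. (v::real^'n::finite) \<bullet> b) = (\<Prod>i\<in>UNIV. v $ i)"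
  by (simp add: Basis_vec_def cart_eq_inner_axis axis_eq_axis prod.UNION_disjoint)

lemma ball_Basis_vec_le: "(\<forall>b\<in>Basis. (l::real^'n::finite) \<bullet> b \<le> u \<bullet> b) \<longleftrightarrow> (\<forall>i. l $ i \<le> u $ i)"
  by (auto simp: Basis_vec_def cart_eq_inner_axis)

lemma lborel_distr_vec_to_copy: "distr lborel borel (vec_to_copy :: real^'a::finite \<Rightarrow> _) = lborel"
proof (rule lborel_eqI[symmetric])
  fix l u :: "real^'a wellorder_copy"
  assume "\<And>b. b \<in> Basis \<Longrightarrow> l \<bullet> b \<le> u \<bullet> b"
  then have lu: "\<And>i. l $ i \<le> u $ i" using ball_Basis_vec_le by blast
  have "vec_to_copy -` box l u = box (vec_of_copy l) (vec_of_copy u)"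
    by (auto simp: mem_box_cart vec_to_copy_def vec_of_copy_def)
       (metis Abs_wellorder_copy_inverse Rep_wellorder_copy_inverse UNIV_I)+
  then have "emeasure (distr lborel borel vec_to_copy) (box l u)
      = emeasure lborel (box (vec_of_copy l) (vec_of_copy u))"
    by (subst emeasure_distr) auto
  also have "\<dots> = (\<Prod>a\<in>UNIV. u $ Abs_wellorder_copy a - l $ Abs_wellorder_copy a)"
    using lu by (simp add: emeasure_lborel_box_eq ball_Basis_vec_le prod_Basis_vec vec_of_copy_def prod_nonneg)
  also have "\<dots> = (\<Prod>i\<in>UNIV. u $ i - l $ i)"
    using prod.reindex_bij_betw[OF bij_Abs_wellorder_copy, of "\<lambda>i. u $ i - l $ i"] by simp
  also have "\<dots> = (\<Prod>b\<in>Basis. (u - l) \<bullet> b)"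
    by (simp add: prod_Basis_vec)
  finally show "emeasure (distr lborel borel vec_to_copy) (box l u) = (\<Prod>b\<in>Basis. (u - l) \<bullet> b)" .
qed simp

lemma nn_integral_lborel_vec_of_copy:
  fixes F :: "real^'a::finite \<Rightarrow> ennreal"
  assumes [measurable]: "F \<in> borel_measurable borel"
  shows "(\<integral>\<^sup>+y. F (vec_of_copy y) \<partial>lborel) = (\<integral>\<^sup>+x. F x \<partial>lborel)"
proof -
  have "(\<integral>\<^sup>+y. F (vec_of_copy y) \<partial>lborel)
      = (\<integral>\<^sup>+y. F (vec_of_copy y) \<partial>distr lborel borel (vec_to_copy :: real^'a \<Rightarrow> _))"
    by (simp add: lborel_distr_vec_to_copy)
  also have "\<dots> = (\<integral>\<^sup>+x. F x \<partial>lborel)"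
    by (subst nn_integral_distr) auto
  finally show ?thesis .
qed

lemma det_matrix_conj_vec_copy:
  fixes L :: "real^'a::finite \<Rightarrow> real^'a"
  assumes "linear L"
  shows "det (matrix (\<lambda>y. vec_to_copy (L (vec_of_copy y)))) = det (matrix L)"
proof -
  have inv_Abs: "inv Abs_wellorder_copy = Rep_wellorder_copy"
    by (metis Rep_wellorder_copy_inverse bij_Abs_wellorder_copy bij_is_inj inv_f_f ext)
  have range_Abs: "range Abs_wellorder_copy = UNIV"
    by (metis bij_Abs_wellorder_copy bij_def)
  have axis_of_copy: "vec_of_copy (axis j 1) = axis (Rep_wellorder_copy j) 1" for j
    by (auto simp: vec_of_copy_def axis_def vec_eq_iff)
      (metis Abs_wellorder_copy_inverse Rep_wellorder_copy_inverse UNIV_I)+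
  have "matrix (\<lambda>y. vec_to_copy (L (vec_of_copy y))) = embed_matrix Abs_wellorder_copy (matrix L)"
    by (simp add: matrix_def embed_matrix_def vec_eq_iff vec_to_copy_def inv_Abs range_Abs axis_of_copy)
  then show ?thesis
    using det_embed_matrix bij_Abs_wellorder_copy bij_is_inj by metis
qed

lemma has_integral_change_of_variables_nonneg_wellorder:
  fixes g :: "real^'a::{finite,wellorder} \<Rightarrow> real^'a::_" and h :: "real^'a::_ \<Rightarrow> real"
  assumes S: "S \<in> sets lebesgue" and der: "\<And>x. x \<in> S \<Longrightarrow> (g has_derivative g' x) (at x within S)"
    and inj: "inj_on g S" and h_nonneg: "\<And>x. 0 \<le> h x" and h: "(h has_integral I) (g ` S)"
  shows "((\<lambda>x. \<bar>det (matrix (g' x))\<bar> * h (g x)) has_integral I) S"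
proof -
  have "h absolutely_integrable_on g ` S"
    using h h_nonneg absolutely_integrable_on_iff_nonneg by blast
  then have "(\<lambda>x. vec (h x) :: real^1) absolutely_integrable_on g ` S"
    by (simp add: absolutely_integrable_on_1_iff)
  moreover have "integral (g ` S) (\<lambda>x. vec (h x) :: real^1) = vec I"
    using h by (simp add: integral_on_1_eq integral_unique)
  ultimately have cv: "(\<lambda>x. \<bar>det (matrix (g' x))\<bar> *\<^sub>R (vec (h (g x)) :: real^1)) absolutely_integrable_on S \<and>
      integral S (\<lambda>x. \<bar>det (matrix (g' x))\<bar> *\<^sub>R (vec (h (g x)) :: real^1)) = vec I"
    using has_absolute_integral_change_of_variables[OF S der inj, of "\<lambda>x. vec (h x)" "vec I"] by blast
  have "(\<lambda>x. \<bar>det (matrix (g' x))\<bar> * h (g x)) absolutely_integrable_on S"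
    using cv by (simp add: absolutely_integrable_on_1_iff)
  moreover have "integral S (\<lambda>x. \<bar>det (matrix (g' x))\<bar> * h (g x)) = I"
    using cv by (simp add: integral_on_1_eq vec_eq_iff)
  ultimately show ?thesis
    by (metis absolutely_integrable_on_def has_integral_integral)
qed

lemma nn_integral_change_of_variables_wellorder:
  fixes g :: "real^'a::{finite,wellorder} \<Rightarrow> real^'a::_" and h :: "real^'a::_ \<Rightarrow> real"
  assumes S: "S \<in> sets lebesgue" and der: "\<And>x. x \<in> S \<Longrightarrow> (g has_derivative g' x) (at x within S)"
    and inj: "inj_on g S" and h_nonneg: "\<And>x. 0 \<le> h x"
    and meas: "(\<lambda>x. indicator (g ` S) x * h x) \<in> borel_measurable borel"
    and fin: "(\<integral>\<^sup>+x. ennreal (indicator (g ` S) x * h x) \<partial>lborel) < \<infinity>"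
  shows "(\<integral>\<^sup>+x. ennreal (indicator (g ` S) x * h x) \<partial>lborel)
       = (\<integral>\<^sup>+x. ennreal (indicator S x * (\<bar>det (matrix (g' x))\<bar> * h (g x))) \<partial>lborel)"
proof -
  have "integrable lborel (\<lambda>x. indicator (g ` S) x * h x)"
    using meas fin h_nonneg by (intro integrableI_nonneg) auto
  then have "(\<lambda>x. indicator (g ` S) x * h x) integrable_on UNIV"
    using has_integral_integral_lborel by blast
  moreover have "(\<lambda>x. indicator (g ` S) x * h x) = (\<lambda>x. if x \<in> g ` S then h x else 0)"
    by (auto simp: indicator_def)
  ultimately have "h integrable_on g ` S"
    using integrable_restrict_UNIV by metis
  then obtain I where I: "(h has_integral I) (g ` S)"
    by blast
  then have "(\<integral>\<^sup>+x. ennreal (indicator S x * (\<bar>det (matrix (g' x))\<bar> * h (g x))) \<partial>lborel) = I"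
    using has_integral_change_of_variables_nonneg_wellorder[OF S der inj h_nonneg] h_nonneg
    by (intro nn_integral_has_integral_lebesgue) auto
  moreover have "(\<integral>\<^sup>+x. ennreal (indicator (g ` S) x * h x) \<partial>lborel) = I"
    using I h_nonneg by (intro nn_integral_has_integral_lebesgue) auto
  ultimately show ?thesis by simp
qed

lemma has_derivative_conj_vec_copy:
  assumes "(g has_derivative g') (at (vec_of_copy y) within S)"
  shows "((\<lambda>y. vec_to_copy (g (vec_of_copy y))) has_derivative (\<lambda>v. vec_to_copy (g' (vec_of_copy v))))
    (at y within vec_of_copy -` S)"
proof -
  have "vec_of_copy ` (vec_of_copy -` S) = S"
    by (metis surj_def vec_to_of_copy vec_of_to_copy surj_image_vimage_eq)
  then have "(g has_derivative g') (at (vec_of_copy y) within vec_of_copy ` (vec_of_copy -` S))"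
    using assms by simp
  then have "((\<lambda>y. g (vec_of_copy y)) has_derivative (\<lambda>v. g' (vec_of_copy v))) (at y within vec_of_copy -` S)"
    by (rule has_derivative_in_compose[OF linear_imp_has_derivative[OF linear_vec_of_copy]])
  then show ?thesis
    by (rule bounded_linear.has_derivative[OF linear_vec_to_copy[unfolded linear_conv_bounded_linear]])
qed

lemma nn_integral_change_of_variables:
  fixes g :: "real^'a::finite \<Rightarrow> real^'a" and h :: "real^'a \<Rightarrow> real"
  assumes S: "S \<in> sets borel" and der: "\<And>x. x \<in> S \<Longrightarrow> (g has_derivative g' x) (at x within S)"
    and inj: "inj_on g S" and h_nonneg: "\<And>x. 0 \<le> h x"
    and meas_image: "(\<lambda>x. indicator (g ` S) x * h x) \<in> borel_measurable borel"
    and meas_domain: "(\<lambda>x. indicator S x * (\<bar>det (matrix (g' x))\<bar> * h (g x))) \<in> borel_measurable borel"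
    and fin: "(\<integral>\<^sup>+x. ennreal (indicator (g ` S) x * h x) \<partial>lborel) < \<infinity>"
  shows "(\<integral>\<^sup>+x. ennreal (indicator (g ` S) x * h x) \<partial>lborel)
       = (\<integral>\<^sup>+x. ennreal (indicator S x * (\<bar>det (matrix (g' x))\<bar> * h (g x))) \<partial>lborel)"
proof -
  define G where "G y = vec_to_copy (g (vec_of_copy y))" for y
  define G' where "G' y v = vec_to_copy (g' (vec_of_copy y) (vec_of_copy v))" for y v
  define S' where "S' = vec_of_copy -` S"
  define H where "H y = h (vec_of_copy y)" for y
  have S': "S' \<in> sets lebesgue"
    unfolding S'_def using measurable_sets_borel[OF borel_measurable_vec_of_copy S] by simp
  have der': "(G has_derivative G' y) (at y within S')" if "y \<in> S'" for y
    using der that unfolding G_def G'_def S'_def by (intro has_derivative_conj_vec_copy) simp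
  have inj': "inj_on G S'"
    using inj unfolding G_def S'_def inj_on_def by (metis vec_of_to_copy vec_to_of_copy vimageE)
  have "G ` S' = vec_of_copy -` (g ` S)"
    unfolding G_def S'_def by (auto simp: image_iff) (metis vec_of_to_copy vec_to_of_copy vimage_eq)
  then have image: "indicator (G ` S') y * H y = indicator (g ` S) (vec_of_copy y) * h (vec_of_copy y)" for y
    by (auto simp: H_def indicator_def)
  have domain: "indicator S' y * (\<bar>det (matrix (G' y))\<bar> * H (G y))
      = indicator S (vec_of_copy y) * (\<bar>det (matrix (g' (vec_of_copy y)))\<bar> * h (g (vec_of_copy y)))" for y
  proof (cases "vec_of_copy y \<in> S")
    case True
    then have "linear (g' (vec_of_copy y))" using der has_derivative_linear by blast
    then show ?thesis
      using True unfolding S'_def G'_def H_def G_def by (simp add: det_matrix_conj_vec_copy)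
  qed (simp add: S'_def)
  have F_of_copy: "(\<integral>\<^sup>+y. ennreal (F (vec_of_copy y)) \<partial>lborel) = (\<integral>\<^sup>+x. ennreal (F x) \<partial>lborel)"
    if "F \<in> borel_measurable borel" for F :: "real^'a \<Rightarrow> real"
    using that by (intro nn_integral_lborel_vec_of_copy) measurable
  have "(\<integral>\<^sup>+y. ennreal (indicator (G ` S') y * H y) \<partial>lborel)
      = (\<integral>\<^sup>+y. ennreal (indicator S' y * (\<bar>det (matrix (G' y))\<bar> * H (G y))) \<partial>lborel)"
  proof (rule nn_integral_change_of_variables_wellorder[OF S' der' inj'])
    show "(\<lambda>y. indicator (G ` S') y * H y) \<in> borel_measurable borel"
      unfolding image using meas_image by measurable
    show "(\<integral>\<^sup>+y. ennreal (indicator (G ` S') y * H y) \<partial>lborel) < \<infinity>"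
      unfolding image using F_of_copy[OF meas_image] fin by simp
  qed (simp add: H_def h_nonneg)+
  then show ?thesis
    unfolding image domain using F_of_copy[OF meas_image] F_of_copy[OF meas_domain] by simp
qed

section \<open>Coordinates, Jacobians and diffeomorphisms\<close>

lemma main_coords_join_coords [simp]: "inj e \<Longrightarrow> main_coords e (join_coords e z y) = z"
  by (simp add: main_coords_def join_coords_def vec_eq_iff)

lemma join_coords_main_coords [simp]: "join_coords e (main_coords e y) y = y"
  by (simp add: main_coords_def join_coords_def vec_eq_iff f_inv_into_f)

lemma join_coords_join_coords [simp]: "join_coords e z (join_coords e z' y) = join_coords e z y"
  by (simp add: join_coords_def vec_eq_iff)

lemma aux_dens_join_coords [simp]: "aux_dens f e (join_coords e z y) = aux_dens f e y"
  by (simp add: aux_dens_def join_coords_def)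

lemma prod_dens_split:
  fixes e :: "'n::finite \<Rightarrow> 'm::finite"
  assumes "inj e"
  shows "prod_dens f y = prod_dens f (main_coords e y) * aux_dens f e y"
proof -
  have "prod_dens f y = (\<Prod>i\<in>range e. f (y $ i)) * aux_dens f e y"
    unfolding prod_dens_def aux_dens_def
    by (subst prod.subset_diff[of "range e"]) (auto simp: mult.commute)
  also have "(\<Prod>i\<in>range e. f (y $ i)) = (\<Prod>a\<in>UNIV. f (y $ e a))"
    using assms by (simp add: prod.reindex)
  finally show ?thesis by (simp add: prod_dens_def main_coords_def)
qed

lemma linear_main_coords: "linear (main_coords e)"
  by (auto simp: linear_iff main_coords_def vec_eq_iff)

lemma linear_join_coords: "linear (\<lambda>(z, y). join_coords e z y)"
  by (auto simp: linear_iff join_coords_def vec_eq_iff)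

lemma borel_measurable_main_coords [measurable]: "main_coords e \<in> borel_measurable borel"
  by (intro borel_measurable_continuous_onI linear_continuous_on linear_conv_bounded_linear[THEN iffD1]
      linear_main_coords)

lemma abs_jac_compose:
  fixes f g :: "real^'n::finite \<Rightarrow> real^'n"
  assumes g: "g differentiable (at x)" and f: "f differentiable (at (g x))"
  shows "abs_jac (\<lambda>y. f (g y)) x = abs_jac f (g x) * abs_jac g x"
proof -
  let ?Dg = "frechet_derivative g (at x)" and ?Df = "frechet_derivative f (at (g x))"
  have dg: "(g has_derivative ?Dg) (at x)" and df: "(f has_derivative ?Df) (at (g x))"
    using g f frechet_derivative_works by blast+
  then have "frechet_derivative (\<lambda>y. f (g y)) (at x) = ?Df \<circ> ?Dg"
    using frechet_derivative_at[OF has_derivative_compose[OF dg df]] by (simp add: comp_def)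
  moreover have "matrix (?Df \<circ> ?Dg) = matrix ?Df ** matrix ?Dg"
    using dg df has_derivative_linear matrix_compose by blast
  ultimately show ?thesis unfolding abs_jac_def by (simp add: det_mul abs_mult)
qed

lemma differentiable_at_compose:
  "g differentiable (at x) \<Longrightarrow> f differentiable (at (g x)) \<Longrightarrow> (\<lambda>y. f (g y)) differentiable (at x)"
  using differentiable_chain_at[of g x f] by (simp add: comp_def)

lemma diffeo_betweenD:
  fixes T :: "real^'a::finite \<Rightarrow> real^'a"
  assumes "diffeo_between U V T"
  shows "open U" "open V" "\<And>x. x \<in> U \<Longrightarrow> T x \<in> V"
    "\<And>y. y \<in> V \<Longrightarrow> the_inv_into U T y \<in> U"
    "\<And>x. x \<in> U \<Longrightarrow> the_inv_into U T (T x) = x"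
    "\<And>y. y \<in> V \<Longrightarrow> T (the_inv_into U T y) = y"
    "\<And>x. x \<in> U \<Longrightarrow> T differentiable (at x)"
    "\<And>y. y \<in> V \<Longrightarrow> the_inv_into U T differentiable (at y)"
  using assms unfolding diffeo_between_def bij_betw_def
  by (auto simp: the_inv_into_f_f f_the_inv_into_f the_inv_into_into)

lemma abs_jac_the_inv_into:
  fixes T :: "real^'n::finite \<Rightarrow> real^'n"
  assumes T: "diffeo_between U V T" and x: "x \<in> U"
  shows "abs_jac (the_inv_into U T) (T x) * abs_jac T x = 1"
proof -
  note T' = diffeo_betweenD[OF T]
  have "((\<lambda>y. the_inv_into U T (T y))
      has_derivative frechet_derivative (\<lambda>y. the_inv_into U T (T y)) (at x)) (at x)"
    using differentiable_at_compose[OF T'(7,8)] x T'(3) frechet_derivative_works by blast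
  then have "((\<lambda>y. y) has_derivative frechet_derivative (\<lambda>y. the_inv_into U T (T y)) (at x)) (at x)"
    by (rule has_derivative_transform_within_open[OF _ T'(1) x]) (simp add: T'(5))
  then have "frechet_derivative (\<lambda>y. the_inv_into U T (T y)) (at x) = (\<lambda>y. y)"
    using has_derivative_unique has_derivative_ident by blast
  then have "abs_jac (\<lambda>y. the_inv_into U T (T y)) x = 1"
    by (simp add: abs_jac_def matrix_id_mat_1[unfolded id_def])
  then show ?thesis using abs_jac_compose T'(7,8) x T'(3) by metis
qed

lemma has_derivative_join_coords:
  assumes "(F has_derivative D) (at (main_coords e y))"
  shows "((\<lambda>y. join_coords e (F (main_coords e y)) y)
    has_derivative (\<lambda>v. join_coords e (D (main_coords e v)) v)) (at y)"
proof -
  have "((\<lambda>y. (F (main_coords e y), y)) has_derivative (\<lambda>v. (D (main_coords e v), v))) (at y)"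
    by (intro has_derivative_Pair has_derivative_ident
        has_derivative_compose[OF linear_imp_has_derivative[OF linear_main_coords] assms])
  from has_derivative_compose[OF this linear_imp_has_derivative[OF linear_join_coords]]
  show ?thesis by simp
qed

lemma matrix_join_coords:
  fixes D :: "real^'n::finite \<Rightarrow> real^'n" and e :: "'n \<Rightarrow> 'm::finite"
  assumes e: "inj e" and D: "linear D"
  shows "matrix (\<lambda>v. join_coords e (D (main_coords e v)) v) = embed_matrix e (matrix D)"
proof -
  have main_axis: "main_coords e (axis j 1) = (if j \<in> range e then axis (inv e j) 1 else 0)" for j
    using e by (auto simp: main_coords_def axis_def vec_eq_iff inj_eq)
  show ?thesis
    using linear_0[OF D]
    by (simp add: matrix_def embed_matrix_def join_coords_def vec_eq_iff main_axis) (simp add: axis_def)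
qed

lemma abs_jac_join_coords:
  fixes F :: "real^'n::finite \<Rightarrow> real^'n" and e :: "'n \<Rightarrow> 'm::finite"
  assumes e: "inj e" and F: "F differentiable (at (main_coords e y))"
  shows "abs_jac (\<lambda>y. join_coords e (F (main_coords e y)) y) y = abs_jac F (main_coords e y)"
    and "(\<lambda>y. join_coords e (F (main_coords e y)) y) differentiable (at y)"
proof -
  let ?D = "frechet_derivative F (at (main_coords e y))"
  have D: "(F has_derivative ?D) (at (main_coords e y))"
    using F frechet_derivative_works by blast
  note join = has_derivative_join_coords[OF D]
  then show "(\<lambda>y. join_coords e (F (main_coords e y)) y) differentiable (at y)"
    unfolding differentiable_def by blast
  show "abs_jac (\<lambda>y. join_coords e (F (main_coords e y)) y) y = abs_jac F (main_coords e y)"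
    unfolding abs_jac_def frechet_derivative_at[OF join, symmetric]
    using matrix_join_coords[OF e has_derivative_linear[OF D]] det_embed_matrix[OF e, of "matrix ?D"] by simp
qed

section \<open>Densities of push-forward measures\<close>

lemma continuous_on_det:
  fixes M :: "'x::topological_space \<Rightarrow> real^'n::finite^'n"
  assumes "continuous_on S M"
  shows "continuous_on S (\<lambda>x. det (M x))"
  unfolding det_def using assms by (intro continuous_intros)

lemma nn_integral_eq_of_distr_density:
  assumes [measurable]: "f \<in> borel_measurable borel" "g \<in> borel_measurable borel" "h \<in> borel_measurable borel"
    and push: "distr (density lborel (\<lambda>x. ennreal (g x))) lborel f = density lborel (\<lambda>x. ennreal (h x))"
  shows "(\<integral>\<^sup>+x. ennreal (h x) \<partial>lborel) = (\<integral>\<^sup>+x. ennreal (g x) \<partial>lborel)"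
proof -
  have "(\<integral>\<^sup>+x. ennreal (h x) \<partial>lborel) = emeasure (distr (density lborel (\<lambda>x. ennreal (g x))) lborel f) UNIV"
    by (simp add: push emeasure_density)
  also have "\<dots> = (\<integral>\<^sup>+x. ennreal (g x) \<partial>lborel)"
    by (simp add: emeasure_distr emeasure_density)
  finally show ?thesis .
qed

lemma AE_distr_density_vanishes_outside:
  fixes f :: "real^'a::finite \<Rightarrow> real^'a" and g h :: "real^'a \<Rightarrow> real"
  assumes [measurable]: "f \<in> borel_measurable borel" "g \<in> borel_measurable borel" "h \<in> borel_measurable borel"
    "W' \<in> sets borel"
    and h_nonneg: "\<And>x. 0 \<le> h x"
    and g_supp: "\<And>x. x \<notin> W \<Longrightarrow> g x = 0" and f_into: "\<And>x. x \<in> W \<Longrightarrow> f x \<in> W'"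
    and push: "distr (density lborel (\<lambda>x. ennreal (g x))) lborel f = density lborel (\<lambda>x. ennreal (h x))"
  shows "AE z in lborel. z \<notin> W' \<longrightarrow> h z = 0"
proof -
  have "(\<integral>\<^sup>+ z. ennreal (h z) * indicator (- W') z \<partial>lborel)
      = emeasure (distr (density lborel (\<lambda>x. ennreal (g x))) lborel f) (- W')"
    by (simp add: push emeasure_density)
  also have "\<dots> = (\<integral>\<^sup>+ x. ennreal (g x) * indicator (f -` (- W')) x \<partial>lborel)"
    using measurable_sets_borel[of f borel "- W'"] by (simp add: emeasure_distr emeasure_density)
  also have "\<dots> = 0"
    using f_into g_supp by (intro nn_integral_zero' AE_I2) (force simp: indicator_def)
  finally have "AE z in lborel. ennreal (h z) * indicator (- W') z = 0"
    by (subst (asm) nn_integral_0_iff_AE) auto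
  then show ?thesis
    by eventually_elim (auto simp: indicator_def ennreal_eq_0_iff intro: antisym[OF _ h_nonneg])
qed

lemma sets_borel_image_diffeo:
  fixes f :: "real^'a::finite \<Rightarrow> real^'a"
  assumes f: "diffeo_between W W' f" and B: "B \<in> sets borel" "B \<subseteq> W"
  shows "f ` B \<in> sets borel"
proof -
  note f' = diffeo_betweenD[OF f]
  have "continuous_on W' (the_inv_into W f)"
    using f'(8) by (intro continuous_at_imp_continuous_on ballI differentiable_imp_continuous_within)
  then have "the_inv_into W f \<in> borel_measurable (restrict_space borel W')"
    by (rule borel_measurable_continuous_on_restrict)
  then have "the_inv_into W f -` B \<inter> space (restrict_space borel W') \<in> sets (restrict_space borel W')"
    using B(1) by (rule measurable_sets)
  then have "the_inv_into W f -` B \<inter> W' \<in> sets borel"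
    using f'(2) by (simp add: sets_restrict_space_iff)
  moreover have "f ` B = the_inv_into W f -` B \<inter> W'"
    using B(2) f'(3,5,6) by (auto simp: image_iff) (metis subsetD)+
  ultimately show ?thesis by simp
qed

lemma borel_measurable_indicator_abs_jac:
  fixes f :: "real^'a::finite \<Rightarrow> real^'a"
  assumes "diffeo_between W W' f"
  shows "(\<lambda>x. indicator W x * abs_jac f x) \<in> borel_measurable borel"
proof -
  have "continuous_on W (abs_jac f)"
    using assms unfolding abs_jac_def diffeo_between_def by (intro continuous_on_rabs continuous_on_det) auto
  then show ?thesis
    using borel_measurable_continuous_on_indicator[of W "abs_jac f"] diffeo_betweenD(1)[OF assms] by simp
qed

lemma nn_integral_image_diffeo:
  fixes f :: "real^'a::finite \<Rightarrow> real^'a" and h :: "real^'a \<Rightarrow> real"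
  assumes f: "diffeo_between W W' f" and [measurable]: "f \<in> borel_measurable borel"
    and B: "B \<in> sets borel" "B \<subseteq> W"
    and [measurable]: "h \<in> borel_measurable borel" and h_nonneg: "\<And>x. 0 \<le> h x"
    and fin: "(\<integral>\<^sup>+x. ennreal (indicator (f ` B) x * h x) \<partial>lborel) < \<infinity>"
  shows "(\<integral>\<^sup>+x. ennreal (indicator (f ` B) x * h x) \<partial>lborel)
       = (\<integral>\<^sup>+x. ennreal (indicator B x * (h (f x) * abs_jac f x)) \<partial>lborel)"
proof -
  note f' = diffeo_betweenD[OF f]
  have [measurable]: "f ` B \<in> sets borel" "B \<in> sets borel"
    using sets_borel_image_diffeo[OF f B] B by auto
  have J: "(\<lambda>x. indicator W x * abs_jac f x) \<in> borel_measurable borel"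
    using borel_measurable_indicator_abs_jac[OF f] .
  have "(\<lambda>x. indicator B x * (\<bar>det (matrix (frechet_derivative f (at x)))\<bar> * h (f x)))
      = (\<lambda>x. indicator B x * (indicator W x * abs_jac f x) * h (f x))"
    using B(2) by (auto simp: abs_jac_def indicator_def fun_eq_iff)
  then have "(\<lambda>x. indicator B x * (\<bar>det (matrix (frechet_derivative f (at x)))\<bar> * h (f x)))
      \<in> borel_measurable borel"
    using J by simp
  moreover have "(f has_derivative frechet_derivative f (at x)) (at x within B)" if "x \<in> B" for x
    using f'(7) that B(2) frechet_derivative_works has_derivative_at_withinI by blast
  moreover have "inj_on f B"
    using f B(2) unfolding diffeo_between_def bij_betw_def by (blast intro: inj_on_subset)
  ultimately show ?thesis
    using nn_integral_change_of_variables[OF B(1) _ _ h_nonneg _ _ fin] by (simp add: abs_jac_def mult_ac)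
qed

lemma set_nn_integral_distr_density_diffeo:
  fixes f :: "real^'a::finite \<Rightarrow> real^'a" and g h :: "real^'a \<Rightarrow> real"
  assumes f: "diffeo_between W W' f" and f_meas [measurable]: "f \<in> borel_measurable borel"
    and [measurable]: "g \<in> borel_measurable borel" and h_meas [measurable]: "h \<in> borel_measurable borel"
    and h_nonneg: "\<And>x. 0 \<le> h x" and g_supp: "\<And>x. x \<notin> W \<Longrightarrow> g x = 0"
    and g_fin: "(\<integral>\<^sup>+x. ennreal (g x) \<partial>lborel) < \<infinity>"
    and push: "distr (density lborel (\<lambda>x. ennreal (g x))) lborel f = density lborel (\<lambda>x. ennreal (h x))"
    and A: "A \<in> sets lborel"
  shows "(\<integral>\<^sup>+x\<in>A. g x \<partial>lborel) = (\<integral>\<^sup>+x\<in>A. indicator W x * abs_jac f x * h (f x) \<partial>lborel)"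
proof -
  define B where "B = A \<inter> W"
  have B: "B \<in> sets borel" "B \<subseteq> W"
    using A diffeo_betweenD(1)[OF f] by (auto simp: B_def)
  have [measurable]: "f ` B \<in> sets borel"
    using sets_borel_image_diffeo[OF f B] .
  have [measurable]: "f -` f ` B \<in> sets borel"
    using measurable_sets_borel[of f borel "f ` B"] by simp
  have "f -` f ` B \<inter> W = B"
    using f B(2) unfolding diffeo_between_def bij_betw_def inj_on_def by blast
  then have "ennreal (g x) * indicator A x = ennreal (g x) * indicator (f -` f ` B) x" for x
    using g_supp[of x] by (cases "x \<in> W") (auto simp: B_def indicator_def)
  then have "(\<integral>\<^sup>+x\<in>A. g x \<partial>lborel) = (\<integral>\<^sup>+x. ennreal (g x) * indicator (f -` f ` B) x \<partial>lborel)"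
    by simp
  also have "\<dots> = emeasure (distr (density lborel (\<lambda>x. ennreal (g x))) lborel f) (f ` B)"
    by (simp add: emeasure_distr emeasure_density)
  also have "\<dots> = (\<integral>\<^sup>+x. ennreal (indicator (f ` B) x * h x) \<partial>lborel)"
    by (simp add: push emeasure_density) (auto intro!: nn_integral_cong simp: indicator_def)
  finally have image: "(\<integral>\<^sup>+x. ennreal (indicator (f ` B) x * h x) \<partial>lborel) = (\<integral>\<^sup>+x\<in>A. g x \<partial>lborel)" ..
  have "(\<integral>\<^sup>+x\<in>A. g x \<partial>lborel) \<le> (\<integral>\<^sup>+x. g x \<partial>lborel)"
    by (intro nn_integral_mono) (simp add: indicator_def)
  then have "(\<integral>\<^sup>+x. ennreal (indicator (f ` B) x * h x) \<partial>lborel) < \<infinity>"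
    using g_fin image by simp
  then have "(\<integral>\<^sup>+x. ennreal (indicator (f ` B) x * h x) \<partial>lborel)
      = (\<integral>\<^sup>+x. ennreal (indicator B x * (h (f x) * abs_jac f x)) \<partial>lborel)"
    by (rule nn_integral_image_diffeo[OF f f_meas B h_meas h_nonneg])
  also have "\<dots> = (\<integral>\<^sup>+x\<in>A. indicator W x * abs_jac f x * h (f x) \<partial>lborel)"
    by (intro nn_integral_cong) (auto simp: B_def indicator_def mult.commute)
  finally show ?thesis using image by simp
qed

lemma AE_density_eq_diffeo_transform:
  fixes f :: "real^'a::finite \<Rightarrow> real^'a" and g h :: "real^'a \<Rightarrow> real"
  assumes f: "diffeo_between W W' f"
    and [measurable]: "f \<in> borel_measurable borel" "g \<in> borel_measurable borel" "h \<in> borel_measurable borel"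
    and g_nonneg: "\<And>x. 0 \<le> g x" and h_nonneg: "\<And>x. 0 \<le> h x"
    and g_supp: "\<And>x. x \<notin> W \<Longrightarrow> g x = 0"
    and g_fin: "(\<integral>\<^sup>+x. ennreal (g x) \<partial>lborel) < \<infinity>"
    and push: "distr (density lborel (\<lambda>x. ennreal (g x))) lborel f = density lborel (\<lambda>x. ennreal (h x))"
  shows "AE x in lborel. x \<in> W \<longrightarrow> g x = h (f x) * abs_jac f x"
proof -
  have [measurable]: "(\<lambda>x. indicator W x * abs_jac f x * h (f x)) \<in> borel_measurable borel"
    using borel_measurable_indicator_abs_jac[OF f] by measurable
  have "AE x in lborel. ennreal (g x) = ennreal (indicator W x * abs_jac f x * h (f x))"
    using set_nn_integral_distr_density_diffeo[OF assms(1-4) h_nonneg g_supp g_fin push]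
    by (intro sigma_finite_measure.density_unique2[OF sigma_finite_lborel]) auto
  then show ?thesis
  proof eventually_elim
    case (elim x)
    have "0 \<le> abs_jac f x * h (f x)" using h_nonneg by (simp add: abs_jac_def)
    with elim g_nonneg[of x] show ?case by (simp add: indicator_def mult.commute split: if_splits)
  qed
qed

section \<open>Null sets under differentiable maps\<close>

lemma AE_lborel_pullback:
  fixes \<phi> \<psi> :: "real^'a::finite \<Rightarrow> real^'a"
  assumes into: "\<And>x. x \<in> W \<Longrightarrow> \<phi> x \<in> W'" and left_inv: "\<And>x. x \<in> W \<Longrightarrow> \<psi> (\<phi> x) = x"
    and \<psi>: "\<psi> differentiable_on W'" and P: "AE z in lborel. P z"
  shows "AE x in lborel. x \<in> W \<longrightarrow> P (\<phi> x)"
proof -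
  obtain N where N: "{z \<in> space lborel. \<not> P z} \<subseteq> N" "N \<in> null_sets lborel"
    using P unfolding eventually_ae_filter by auto
  then have "negligible N"
    by (simp add: negligible_iff_null_sets null_sets_completionI)
  then have "negligible (N \<inter> W')"
    by (rule negligible_subset) auto
  then have "negligible (\<psi> ` (N \<inter> W'))"
    using \<psi> by (intro negligible_differentiable_image_negligible) (auto intro: differentiable_on_subset)
  then have null: "\<psi> ` (N \<inter> W') \<in> null_sets lebesgue"
    by (simp add: negligible_iff_null_sets)
  have "{x \<in> space lebesgue. \<not> (x \<in> W \<longrightarrow> P (\<phi> x))} \<subseteq> \<psi> ` (N \<inter> W')"
  proof
    fix x assume "x \<in> {x \<in> space lebesgue. \<not> (x \<in> W \<longrightarrow> P (\<phi> x))}"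
    then have "x \<in> W" "\<phi> x \<in> N \<inter> W'" using N(1) into by auto
    then show "x \<in> \<psi> ` (N \<inter> W')" using left_inv by (metis image_eqI)
  qed
  then have "AE x in lebesgue. x \<in> W \<longrightarrow> P (\<phi> x)"
    using null by (intro AE_I')
  then show ?thesis by (simp add: AE_completion_iff)
qed

lemma null_sets_lborel_vimage_main_coords:
  fixes e :: "'n::finite \<Rightarrow> 'm::finite"
  assumes e: "inj e" and N: "N \<in> null_sets lborel"
  shows "main_coords e -` N \<in> null_sets (lborel :: (real^'m) measure)"
proof -
  define A where "A = main_coords e -` N"
  have A [measurable]: "A \<in> sets borel"
    unfolding A_def using measurable_sets_borel[OF borel_measurable_main_coords] null_setsD2[OF N] by simp
  define \<Psi> :: "(real^'n) \<times> (real^'m) \<Rightarrow> (real^'m) \<times> (real^'n)"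
    where "\<Psi> = (\<lambda>(z, y). (join_coords e z y, main_coords e y))"
  have lin: "linear \<Psi>"
    using linear_join_coords[of e] linear_main_coords[of e]
    unfolding \<Psi>_def linear_iff by (auto simp: scaleR_prod_def linear_add linear_scale)
  have image: "\<Psi> ` (N \<times> UNIV) = A \<times> UNIV"
  proof (intro set_eqI iffI)
    fix p :: "(real^'m) \<times> (real^'n)" assume "p \<in> A \<times> UNIV"
    then obtain y z where "p = (y, z)" "main_coords e y \<in> N" by (auto simp: A_def)
    moreover have "\<Psi> (main_coords e y, join_coords e z y) = (y, z)"
      unfolding \<Psi>_def using e by simp
    ultimately show "p \<in> \<Psi> ` (N \<times> UNIV)" by (metis UNIV_I image_eqI mem_Sigma_iff)
  qed (auto simp: \<Psi>_def A_def e)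
  have "negligible (N \<times> (UNIV :: (real^'m) set))"
    using lborel.times_in_null_sets1[OF N, of "UNIV :: (real^'m) set"]
    by (simp add: lborel_prod negligible_iff_null_sets null_sets_completionI)
  then have "negligible (\<Psi> ` (N \<times> UNIV))"
    by (intro negligible_differentiable_image_negligible linear_imp_differentiable_on[OF lin]) simp_all
  then have "negligible (A \<times> (UNIV :: (real^'n) set))"
    unfolding image .
  then have "A \<times> (UNIV :: (real^'n) set) \<in> null_sets (lborel \<Otimes>\<^sub>M lborel)"
    by (simp add: lborel_prod[symmetric] negligible_iff_null_sets null_sets_completion_iff
        borel_prod[symmetric])
  then have "emeasure lborel A * emeasure lborel (UNIV :: (real^'n) set) = 0"
    by (simp add: lborel.emeasure_pair_measure_Times null_sets_def)
  then show ?thesis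
    using A by (simp add: A_def null_sets_def ennreal_top_neq_zero)
qed

lemma AE_lborel_main_coords:
  fixes e :: "'n::finite \<Rightarrow> 'm::finite"
  assumes e: "inj e" and P: "AE z in lborel. P z"
  shows "AE y in (lborel :: (real^'m) measure). P (main_coords e y)"
proof -
  obtain N where N: "{z \<in> space lborel. \<not> P z} \<subseteq> N" "N \<in> null_sets lborel"
    using P unfolding eventually_ae_filter by auto
  show ?thesis
    using N by (intro AE_I'[OF null_sets_lborel_vimage_main_coords[OF e N(2)]]) auto
qed

section \<open>The transport proposals\<close>

lemma prod_dens_nonneg: "(\<And>x. 0 \<le> f x) \<Longrightarrow> 0 \<le> prod_dens f z"
  unfolding prod_dens_def by (simp add: prod_nonneg)

lemma borel_measurable_prod_dens [measurable]:
  assumes [measurable]: "f \<in> borel_measurable borel"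
  shows "(prod_dens f :: real^'a::finite \<Rightarrow> real) \<in> borel_measurable borel"
  unfolding prod_dens_def by measurable

lemma borel_measurable_aux_dens [measurable]:
  assumes [measurable]: "f \<in> borel_measurable borel"
  shows "(aux_dens f e :: real^'m::finite \<Rightarrow> real) \<in> borel_measurable borel"
  unfolding aux_dens_def by measurable

lemma rj_accept_eq_model_ratio:
  assumes "q' * g' * jac = q * g" and "q * g > 0"
  shows "rj_accept (Pk * q) (Pk' * q') jf jr g g' jac = min 1 (Pk' / Pk * (jr / jf))"
proof -
  have "(Pk' * q' * jr * g') / (Pk * q * jf * g) * jac = (Pk' * jr * (q' * g' * jac)) / (Pk * jf * (q * g))"
    by (simp add: field_simps)
  also have "\<dots> = (Pk' * jr * (q * g)) / (Pk * jf * (q * g))"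
    by (simp only: assms(1))
  also have "\<dots> = (Pk' * jr) / (Pk * jf)"
    using assms(2) by (intro mult_divide_mult_cancel_right) auto
  finally show ?thesis by (simp add: rj_accept_def)
qed

locale rj_transport =
  fixes nu :: "real \<Rightarrow> real"
    and p :: "real^'n::finite \<Rightarrow> real" and p' :: "real^'m::finite \<Rightarrow> real"
    and T :: "real^'n \<Rightarrow> real^'n" and U V :: "(real^'n) set"
    and T' :: "real^'m \<Rightarrow> real^'m" and U' V' :: "(real^'m) set"
    and hbar :: "real^'m \<Rightarrow> real^'m"
    and e :: "'n \<Rightarrow> 'm"
  assumes e_inj: "inj e"
    and nu_meas [measurable]: "nu \<in> borel_measurable borel" and nu_nonneg: "\<And>x. nu x \<ge> 0"
    and p_meas [measurable]: "p \<in> borel_measurable borel" and p_nonneg: "\<And>x. p x \<ge> 0"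
    and p_prob: "(\<integral>\<^sup>+ x. ennreal (p x) \<partial>lborel) = 1"
    and p_supp: "\<And>x. x \<notin> U \<Longrightarrow> p x = 0"
    and p'_meas [measurable]: "p' \<in> borel_measurable borel" and p'_nonneg: "\<And>x. p' x \<ge> 0"
    and p'_prob: "(\<integral>\<^sup>+ x. ennreal (p' x) \<partial>lborel) = 1"
    and p'_supp: "\<And>x. x \<notin> U' \<Longrightarrow> p' x = 0"
    and T_diffeo: "diffeo_between U V T" and T_meas [measurable]: "T \<in> borel_measurable borel"
    and T_push: "distr (density lborel (\<lambda>x. ennreal (p x))) lborel T
                   = density lborel (\<lambda>z. ennreal (prod_dens nu z))"
    and T'_diffeo: "diffeo_between U' V' T'" and T'_meas [measurable]: "T' \<in> borel_measurable borel"
    and T'_push: "distr (density lborel (\<lambda>x. ennreal (p' x))) lborel T'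
                   = density lborel (\<lambda>z. ennreal (prod_dens nu z))"
    and hbar_diffeo: "diffeo_between UNIV UNIV hbar"
    and hbar_vol: "\<And>y. abs_jac hbar y = 1"
    and hbar_push: "distr (density lborel (\<lambda>z. ennreal (prod_dens nu z))) lborel hbar
                   = density lborel (\<lambda>z. ennreal (prod_dens nu z))"
begin

lemma T_density: "AE x in lborel. x \<in> U \<longrightarrow> p x = prod_dens nu (T x) * abs_jac T x"
  using p_prob p_supp
  by (intro AE_density_eq_diffeo_transform[OF T_diffeo _ _ _ p_nonneg _ _ _ T_push])
     (auto intro: prod_dens_nonneg nu_nonneg)

lemma T'_density: "AE x in lborel. x \<in> U' \<longrightarrow> p' x = prod_dens nu (T' x) * abs_jac T' x"
  using p'_prob p'_supp
  by (intro AE_density_eq_diffeo_transform[OF T'_diffeo _ _ _ p'_nonneg _ _ _ T'_push])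
     (auto intro: prod_dens_nonneg nu_nonneg)

lemma borel_measurable_hbar [measurable]: "hbar \<in> borel_measurable borel"
  using diffeo_betweenD(7)[OF hbar_diffeo]
  by (intro borel_measurable_continuous_onI differentiable_imp_continuous_on
      differentiable_at_imp_differentiable_on) auto

lemma prod_dens_hbar_invariant: "AE z in lborel. prod_dens nu z = prod_dens nu (hbar z)"
proof -
  have "(\<integral>\<^sup>+x. ennreal (prod_dens nu (x :: real^'m)) \<partial>lborel) = 1"
    using nn_integral_eq_of_distr_density[OF T'_meas p'_meas _ T'_push] p'_prob by simp
  then have "AE z in lborel. z \<in> UNIV \<longrightarrow> prod_dens nu z = prod_dens nu (hbar z) * abs_jac hbar z"
    by (intro AE_density_eq_diffeo_transform[OF hbar_diffeo _ _ _ _ _ _ _ hbar_push])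
       (auto intro: prod_dens_nonneg nu_nonneg)
  then show ?thesis by (simp add: hbar_vol)
qed

lemma prod_dens_vanishes_outside_V': "AE z in lborel. z \<notin> V' \<longrightarrow> prod_dens nu z = 0"
  using diffeo_betweenD[OF T'_diffeo] p'_supp
  by (intro AE_distr_density_vanishes_outside[where W = U', OF T'_meas p'_meas _ _ _ _ _ T'_push])
     (auto intro: prod_dens_nonneg nu_nonneg)

lemma prod_dens_vanishes_outside_V: "AE z in lborel. z \<notin> V \<longrightarrow> prod_dens nu z = 0"
  using diffeo_betweenD[OF T_diffeo] p_supp
  by (intro AE_distr_density_vanishes_outside[where W = U, OF T_meas p_meas _ _ _ _ _ T_push])
     (auto intro: prod_dens_nonneg nu_nonneg)

lemma hbar_inverse [simp]: "inv hbar (hbar z) = z" "hbar (inv hbar z) = z"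
  using hbar_diffeo unfolding diffeo_between_def bij_betw_def by (auto simp: surj_f_inv_f)

lemma the_inv_into_hbar: "the_inv_into UNIV hbar = inv hbar"
  using hbar_diffeo unfolding diffeo_between_def bij_betw_def
  by (intro ext the_inv_into_f_eq) (auto simp: surj_f_inv_f)

lemma hbar_differentiable: "hbar differentiable (at z)" "inv hbar differentiable (at z)"
  using diffeo_betweenD(7,8)[OF hbar_diffeo] by (auto simp: the_inv_into_hbar)

lemma abs_jac_inv_hbar: "abs_jac (inv hbar) z = 1"
  using abs_jac_the_inv_into[OF hbar_diffeo, of "inv hbar z"] by (simp add: the_inv_into_hbar hbar_vol)

(* In the notation of the proposal, latent (theta, u) = (z, u) with z = T theta; then
   fwd_map = T'^-1 \<circ> hbar \<circ> latent and rev_map = unlatent \<circ> hbar^-1 \<circ> T'. *)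
definition latent :: "real^'m \<Rightarrow> real^'m" where
  "latent y = join_coords e (T (main_coords e y)) y"

definition unlatent :: "real^'m \<Rightarrow> real^'m" where
  "unlatent w = join_coords e (the_inv_into U T (main_coords e w)) w"

lemma main_coords_latent [simp]: "main_coords e (latent y) = T (main_coords e y)"
  and main_coords_unlatent [simp]: "main_coords e (unlatent w) = the_inv_into U T (main_coords e w)"
  and aux_dens_latent [simp]: "aux_dens nu e (latent y) = aux_dens nu e y"
  and aux_dens_unlatent [simp]: "aux_dens nu e (unlatent w) = aux_dens nu e w"
  by (simp_all add: latent_def unlatent_def e_inj)

lemma unlatent_latent: "main_coords e y \<in> U \<Longrightarrow> unlatent (latent y) = y"
  and latent_unlatent: "main_coords e w \<in> V \<Longrightarrow> latent (unlatent w) = w"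
  using diffeo_betweenD(5,6)[OF T_diffeo] by (simp_all add: latent_def unlatent_def e_inj)

lemma latent_differentiable: "main_coords e y \<in> U \<Longrightarrow> latent differentiable (at y)"
  and abs_jac_latent: "main_coords e y \<in> U \<Longrightarrow> abs_jac latent y = abs_jac T (main_coords e y)"
  and unlatent_differentiable: "main_coords e w \<in> V \<Longrightarrow> unlatent differentiable (at w)"
  and abs_jac_unlatent:
    "main_coords e w \<in> V \<Longrightarrow> abs_jac unlatent w = abs_jac (the_inv_into U T) (main_coords e w)"
  using abs_jac_join_coords[OF e_inj] diffeo_betweenD(7,8)[OF T_diffeo]
  unfolding latent_def[abs_def] unlatent_def[abs_def] by blast+

lemma fwd_map_eq: "fwd_map e T U' T' hbar = (\<lambda>y. the_inv_into U' T' (hbar (latent y)))"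
  by (simp add: fwd_map_def latent_def fun_eq_iff)

lemma rev_map_eq: "rev_map e U T T' hbar = (\<lambda>t. unlatent (inv hbar (T' t)))"
  by (simp add: rev_map_def unlatent_def fun_eq_iff Let_def)

lemma prod_dens_vanishes_off_hbar_preimage: "AE z in lborel. hbar z \<notin> V' \<longrightarrow> prod_dens nu z = 0"
proof -
  have "AE z in lborel. z \<in> UNIV \<longrightarrow> (hbar z \<notin> V' \<longrightarrow> prod_dens nu (hbar z) = 0)"
    using prod_dens_vanishes_outside_V' hbar_differentiable(2)
    by (intro AE_lborel_pullback[where \<psi> = "inv hbar" and W' = UNIV])
       (auto intro: differentiable_at_imp_differentiable_on)
  with prod_dens_hbar_invariant show ?thesis by eventually_elim simp
qed

lemma abs_jac_fwd_map:
  assumes "main_coords e y \<in> U" "hbar (latent y) \<in> V'"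
  shows "abs_jac (fwd_map e T U' T' hbar) y
    = abs_jac (the_inv_into U' T') (hbar (latent y)) * abs_jac T (main_coords e y)"
proof -
  have "(\<lambda>y. hbar (latent y)) differentiable (at y)"
    using assms(1) latent_differentiable hbar_differentiable differentiable_at_compose by blast
  then show ?thesis
    using assms abs_jac_compose[of "\<lambda>y. hbar (latent y)" y "the_inv_into U' T'"]
      abs_jac_compose[of latent y hbar] latent_differentiable abs_jac_latent hbar_differentiable
      diffeo_betweenD(8)[OF T'_diffeo]
    by (simp add: fwd_map_eq hbar_vol)
qed

lemma abs_jac_rev_map:
  assumes "t \<in> U'" "main_coords e (inv hbar (T' t)) \<in> V"
  shows "abs_jac (rev_map e U T T' hbar) t
    = abs_jac (the_inv_into U T) (main_coords e (inv hbar (T' t))) * abs_jac T' t"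
proof -
  have "(\<lambda>t. inv hbar (T' t)) differentiable (at t)"
    using assms(1) diffeo_betweenD(7)[OF T'_diffeo] hbar_differentiable differentiable_at_compose by blast
  then show ?thesis
    using assms abs_jac_compose[of "\<lambda>t. inv hbar (T' t)" t unlatent]
      abs_jac_compose[of T' t "inv hbar"] unlatent_differentiable abs_jac_unlatent hbar_differentiable
      diffeo_betweenD(7)[OF T'_diffeo]
    by (simp add: rev_map_eq abs_jac_inv_hbar)
qed

lemma fwd_map_left_inverse:
  assumes "main_coords e y \<in> U" "hbar (latent y) \<in> V'"
  shows "fwd_map e T U' T' hbar y \<in> {t \<in> U'. main_coords e (inv hbar (T' t)) \<in> V}"
    and "rev_map e U T T' hbar (fwd_map e T U' T' hbar y) = y"
  using diffeo_betweenD(4,6)[OF T'_diffeo assms(2)] diffeo_betweenD(3)[OF T_diffeo assms(1)]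
    unlatent_latent[OF assms(1)]
  by (simp_all add: fwd_map_eq rev_map_eq)

lemma rev_map_left_inverse:
  assumes "t \<in> U'" "main_coords e (inv hbar (T' t)) \<in> V"
  shows "rev_map e U T T' hbar t \<in> {y. main_coords e y \<in> U \<and> hbar (latent y) \<in> V'}"
    and "fwd_map e T U' T' hbar (rev_map e U T T' hbar t) = t"
  using diffeo_betweenD(4)[OF T_diffeo assms(2)] diffeo_betweenD(3,5)[OF T'_diffeo assms(1)]
    latent_unlatent[OF assms(2)]
  by (simp_all add: fwd_map_eq rev_map_eq)

lemma fwd_map_differentiable:
  assumes "main_coords e y \<in> U" "hbar (latent y) \<in> V'"
  shows "fwd_map e T U' T' hbar differentiable (at y)"
proof -
  have "(\<lambda>y. hbar (latent y)) differentiable (at y)"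
    using assms(1) latent_differentiable hbar_differentiable differentiable_at_compose by blast
  then show ?thesis
    unfolding fwd_map_eq using assms(2) diffeo_betweenD(8)[OF T'_diffeo] differentiable_at_compose by blast
qed

lemma rev_map_differentiable:
  assumes "t \<in> U'" "main_coords e (inv hbar (T' t)) \<in> V"
  shows "rev_map e U T T' hbar differentiable (at t)"
proof -
  have "(\<lambda>t. inv hbar (T' t)) differentiable (at t)"
    using assms(1) diffeo_betweenD(7)[OF T'_diffeo] hbar_differentiable differentiable_at_compose by blast
  then show ?thesis
    unfolding rev_map_eq using assms(2) unlatent_differentiable differentiable_at_compose by blast
qed

lemma AE_prod_dens_latent_hbar:
  "AE y in lborel. main_coords e y \<in> U \<longrightarrow>
     prod_dens nu (latent y) = prod_dens nu (hbar (latent y)) \<and>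
     (hbar (latent y) \<notin> V' \<longrightarrow> prod_dens nu (latent y) = 0)"
proof -
  have "AE z in lborel. prod_dens nu z = prod_dens nu (hbar z) \<and> (hbar z \<notin> V' \<longrightarrow> prod_dens nu z = 0)"
    using prod_dens_hbar_invariant prod_dens_vanishes_off_hbar_preimage by eventually_elim simp
  then have "AE y in lborel. y \<in> {y. main_coords e y \<in> U} \<longrightarrow>
      prod_dens nu (latent y) = prod_dens nu (hbar (latent y)) \<and>
      (hbar (latent y) \<notin> V' \<longrightarrow> prod_dens nu (latent y) = 0)"
    using diffeo_betweenD(3)[OF T_diffeo] unlatent_latent unlatent_differentiable
    by (intro AE_lborel_pullback[where \<psi> = unlatent and W' = "{w. main_coords e w \<in> V}"])
       (auto intro: differentiable_at_imp_differentiable_on)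
  then show ?thesis by simp
qed

lemma AE_prod_dens_inv_hbar_T':
  "AE t in lborel. t \<in> U' \<longrightarrow>
     prod_dens nu (T' t) = prod_dens nu (inv hbar (T' t)) \<and>
     (main_coords e (inv hbar (T' t)) \<notin> V \<longrightarrow> prod_dens nu (main_coords e (inv hbar (T' t))) = 0)"
proof -
  have invariant: "AE w in lborel. prod_dens nu (hbar w) = prod_dens nu w \<and>
      (main_coords e w \<notin> V \<longrightarrow> prod_dens nu (main_coords e w) = 0)"
    using prod_dens_hbar_invariant AE_lborel_main_coords[OF e_inj prod_dens_vanishes_outside_V]
    by eventually_elim simp
  have "AE t in lborel. t \<in> U' \<longrightarrow>
      prod_dens nu (hbar (inv hbar (T' t))) = prod_dens nu (inv hbar (T' t)) \<and>
      (main_coords e (inv hbar (T' t)) \<notin> V \<longrightarrow> prod_dens nu (main_coords e (inv hbar (T' t))) = 0)"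
  proof (rule AE_lborel_pullback[where \<phi> = "\<lambda>t. inv hbar (T' t)"
        and \<psi> = "\<lambda>w. the_inv_into U' T' (hbar w)" and W' = "{w. hbar w \<in> V'}", OF _ _ _ invariant])
    show "(\<lambda>w. the_inv_into U' T' (hbar w)) differentiable_on {w. hbar w \<in> V'}"
      using diffeo_betweenD(8)[OF T'_diffeo]
      by (intro differentiable_at_imp_differentiable_on differentiable_at_compose[OF hbar_differentiable(1)])
         auto
  qed (simp_all add: diffeo_betweenD[OF T'_diffeo])
  then show ?thesis by simp
qed

lemma AE_T'_density_fwd_map:
  "AE y in lborel. main_coords e y \<in> U \<and> hbar (latent y) \<in> V' \<longrightarrow>
     p' (fwd_map e T U' T' hbar y) = prod_dens nu (hbar (latent y)) * abs_jac T' (fwd_map e T U' T' hbar y)"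
proof -
  have "AE y in lborel. y \<in> {y. main_coords e y \<in> U \<and> hbar (latent y) \<in> V'} \<longrightarrow>
      (fwd_map e T U' T' hbar y \<in> U' \<longrightarrow> p' (fwd_map e T U' T' hbar y)
         = prod_dens nu (T' (fwd_map e T U' T' hbar y)) * abs_jac T' (fwd_map e T U' T' hbar y))"
  proof (rule AE_lborel_pullback[OF _ _ _ T'_density])
    show "rev_map e U T T' hbar differentiable_on {t \<in> U'. main_coords e (inv hbar (T' t)) \<in> V}"
      using rev_map_differentiable by (intro differentiable_at_imp_differentiable_on) simp
  qed (use fwd_map_left_inverse in blast)+
  moreover have "T' (fwd_map e T U' T' hbar y) = hbar (latent y)" if "hbar (latent y) \<in> V'" for y
    using diffeo_betweenD(6)[OF T'_diffeo that] by (simp add: fwd_map_eq)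
  ultimately show ?thesis
    using fwd_map_left_inverse(1) by (auto elim!: AE_mp)
qed

lemma AE_T_density_rev_map:
  "AE t in lborel. t \<in> U' \<and> main_coords e (inv hbar (T' t)) \<in> V \<longrightarrow>
     p (main_coords e (rev_map e U T T' hbar t))
       = prod_dens nu (main_coords e (inv hbar (T' t))) * abs_jac T (main_coords e (rev_map e U T T' hbar t))"
proof -
  have "AE t in lborel. t \<in> {t \<in> U'. main_coords e (inv hbar (T' t)) \<in> V} \<longrightarrow>
      (main_coords e (rev_map e U T T' hbar t) \<in> U \<longrightarrow> p (main_coords e (rev_map e U T T' hbar t))
         = prod_dens nu (T (main_coords e (rev_map e U T T' hbar t)))
           * abs_jac T (main_coords e (rev_map e U T T' hbar t)))"
  proof (rule AE_lborel_pullback[OF _ _ _ AE_lborel_main_coords[OF e_inj T_density]])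
    show "fwd_map e T U' T' hbar differentiable_on {y. main_coords e y \<in> U \<and> hbar (latent y) \<in> V'}"
      using fwd_map_differentiable by (intro differentiable_at_imp_differentiable_on) simp
  qed (use rev_map_left_inverse in blast)+
  moreover have "T (main_coords e (rev_map e U T T' hbar t)) = main_coords e (inv hbar (T' t))"
    if "main_coords e (inv hbar (T' t)) \<in> V" for t
    using diffeo_betweenD(6)[OF T_diffeo that] by (simp add: rev_map_eq)
  ultimately show ?thesis
    using rev_map_left_inverse(1) by (auto elim!: AE_mp)
qed

lemma fwd_map_density:
  "AE y in lborel. 0 < p (main_coords e y) * aux_dens nu e y \<longrightarrow>
     p' (fwd_map e T U' T' hbar y) * abs_jac (fwd_map e T U' T' hbar) y = p (main_coords e y) * aux_dens nu e y"
  using AE_lborel_main_coords[OF e_inj T_density] AE_prod_dens_latent_hbar AE_T'_density_fwd_map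
proof eventually_elim
  case (elim y)
  let ?m = "main_coords e y" and ?z = "hbar (latent y)" and ?t = "fwd_map e T U' T' hbar y"
  show ?case
  proof
    assume pos: "0 < p ?m * aux_dens nu e y"
    then have U: "?m \<in> U" using p_supp by force
    have "prod_dens nu (latent y) = prod_dens nu (T ?m) * aux_dens nu e y"
      using prod_dens_split[OF e_inj, of nu "latent y"] by simp
    with elim(1) U have p_latent: "p ?m * aux_dens nu e y = prod_dens nu (latent y) * abs_jac T ?m"
      by simp
    with pos elim(2) U have V': "?z \<in> V'" by auto
    have t: "?t \<in> U'" "T' ?t = ?z"
      using diffeo_betweenD(4,6)[OF T'_diffeo V'] by (simp_all add: fwd_map_eq)
    have "p' ?t * abs_jac (fwd_map e T U' T' hbar) y
        = prod_dens nu ?z * abs_jac T' ?t * (abs_jac (the_inv_into U' T') (T' ?t) * abs_jac T ?m)"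
      using elim(3) U V' t by (simp add: abs_jac_fwd_map)
    also have "\<dots> = prod_dens nu (latent y) * abs_jac T ?m
        * (abs_jac (the_inv_into U' T') (T' ?t) * abs_jac T' ?t)"
      using elim(2) U by (simp add: mult_ac)
    also have "\<dots> = p ?m * aux_dens nu e y"
      using abs_jac_the_inv_into[OF T'_diffeo t(1)] p_latent by simp
    finally show "p' ?t * abs_jac (fwd_map e T U' T' hbar) y = p ?m * aux_dens nu e y" .
  qed
qed

lemma rev_map_density:
  "AE t in lborel. 0 < p' t \<longrightarrow>
     p (main_coords e (rev_map e U T T' hbar t)) * aux_dens nu e (rev_map e U T T' hbar t)
       * abs_jac (rev_map e U T T' hbar) t = p' t"
  using T'_density AE_prod_dens_inv_hbar_T' AE_T_density_rev_map
proof eventually_elim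
  case (elim t)
  let ?w = "inv hbar (T' t)" and ?y = "rev_map e U T T' hbar t"
  let ?x = "main_coords e ?y"
  show ?case
  proof
    assume pos: "0 < p' t"
    then have U': "t \<in> U'" using p'_supp by force
    have "prod_dens nu (T' t) = prod_dens nu (main_coords e ?w) * aux_dens nu e ?w"
      using elim(2) U' prod_dens_split[OF e_inj, of nu ?w] by simp
    with elim(1) U' have p'_t: "p' t = prod_dens nu (main_coords e ?w) * aux_dens nu e ?w * abs_jac T' t"
      by simp
    with pos elim(2) U' have V: "main_coords e ?w \<in> V" by auto
    have x: "?x \<in> U" "T ?x = main_coords e ?w"
      using diffeo_betweenD(4,6)[OF T_diffeo V] by (simp_all add: rev_map_eq)
    have "p ?x * aux_dens nu e ?y * abs_jac (rev_map e U T T' hbar) t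
        = prod_dens nu (main_coords e ?w) * abs_jac T ?x * aux_dens nu e ?w
            * (abs_jac (the_inv_into U T) (T ?x) * abs_jac T' t)"
      unfolding abs_jac_rev_map[OF U' V] using elim(3) U' V x by (simp add: rev_map_eq)
    also have "\<dots> = p' t * (abs_jac (the_inv_into U T) (T ?x) * abs_jac T ?x)"
      using p'_t by (simp add: mult_ac)
    also have "\<dots> = p' t"
      using abs_jac_the_inv_into[OF T_diffeo x(1)] by simp
    finally show "p ?x * aux_dens nu e ?y * abs_jac (rev_map e U T T' hbar) t = p' t" .
  qed
qed

lemma fwd_map_accept:
  "AE y in density lborel (\<lambda>y. ennreal (p (main_coords e y) * aux_dens nu e y)).
     rj_accept (Pk * p (main_coords e y)) (Pk' * p' (fwd_map e T U' T' hbar y)) jf jr (aux_dens nu e y) 1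
       (abs_jac (fwd_map e T U' T' hbar) y)
     = min 1 (Pk' / Pk * (jr / jf))"
proof (subst AE_density)
  show "AE y in lborel. 0 < ennreal (p (main_coords e y) * aux_dens nu e y) \<longrightarrow>
      rj_accept (Pk * p (main_coords e y)) (Pk' * p' (fwd_map e T U' T' hbar y)) jf jr (aux_dens nu e y) 1
        (abs_jac (fwd_map e T U' T' hbar) y)
      = min 1 (Pk' / Pk * (jr / jf))"
    using fwd_map_density
  proof eventually_elim
    case (elim y)
    then show ?case
      using rj_accept_eq_model_ratio[where g' = 1] by auto
  qed
qed measurable

lemma rev_map_accept:
  "AE t in density lborel (\<lambda>x. ennreal (p' x)).
     rj_accept (Pk' * p' t) (Pk * p (main_coords e (rev_map e U T T' hbar t))) jf jr
       1 (aux_dens nu e (rev_map e U T T' hbar t)) (abs_jac (rev_map e U T T' hbar) t)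
     = min 1 (Pk / Pk' * (jr / jf))"
proof (subst AE_density)
  show "AE t in lborel. 0 < ennreal (p' t) \<longrightarrow>
      rj_accept (Pk' * p' t) (Pk * p (main_coords e (rev_map e U T T' hbar t))) jf jr
        1 (aux_dens nu e (rev_map e U T T' hbar t)) (abs_jac (rev_map e U T T' hbar) t)
      = min 1 (Pk / Pk' * (jr / jf))"
    using rev_map_density
  proof eventually_elim
    case (elim t)
    then show ?case
      using rj_accept_eq_model_ratio[where g = 1] by auto
  qed
qed measurable

end

theorem proposition1:
  fixes P :: "'k pmf"                      \<comment> \<open>marginal pi(k) on the discrete model set\<close>
    and J :: "'k \<Rightarrow> 'k pmf"              \<comment> \<open>model-jump distributions j_k\<close>
    and k k' :: 'k
    and nu :: "real \<Rightarrow> real"               \<comment> \<open>univariate reference density\<close>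
    and p :: "real^'n::finite \<Rightarrow> real"      \<comment> \<open>conditional density pi_k on R^{n_k}\<close>
    and p' :: "real^'m::finite \<Rightarrow> real"     \<comment> \<open>conditional density pi_{k'} on R^{n_{k'}}\<close>
    and T :: "real^'n \<Rightarrow> real^'n" and U V :: "(real^'n) set"
    and T' :: "real^'m \<Rightarrow> real^'m" and U' V' :: "(real^'m) set"
    and hbar :: "real^'m \<Rightarrow> real^'m"
    and e :: "'n \<Rightarrow> 'm"
  assumes e_inj: "inj e"
    and nu_meas: "nu \<in> borel_measurable borel" and nu_nonneg: "\<And>x. nu x \<ge> 0"
    and nu_prob: "(\<integral>\<^sup>+ x. ennreal (nu x) \<partial>lborel) = 1"
    and p_meas: "p \<in> borel_measurable borel" and p_nonneg: "\<And>x. p x \<ge> 0"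
    and p_prob: "(\<integral>\<^sup>+ x. ennreal (p x) \<partial>lborel) = 1"
    and p_supp: "\<And>x. x \<notin> U \<Longrightarrow> p x = 0"
    and p'_meas: "p' \<in> borel_measurable borel" and p'_nonneg: "\<And>x. p' x \<ge> 0"
    and p'_prob: "(\<integral>\<^sup>+ x. ennreal (p' x) \<partial>lborel) = 1"
    and p'_supp: "\<And>x. x \<notin> U' \<Longrightarrow> p' x = 0"
    and T_diffeo: "diffeo_between U V T" and T_meas: "T \<in> borel_measurable borel"
    and T_push: "distr (density lborel (\<lambda>x. ennreal (p x))) lborel T
                   = density lborel (\<lambda>z. ennreal (prod_dens nu z))"
    and T'_diffeo: "diffeo_between U' V' T'" and T'_meas: "T' \<in> borel_measurable borel"
    and T'_push: "distr (density lborel (\<lambda>x. ennreal (p' x))) lborel T'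
                   = density lborel (\<lambda>z. ennreal (prod_dens nu z))"
    and hbar_diffeo: "diffeo_between UNIV UNIV hbar"
    and hbar_vol: "\<And>y. abs_jac hbar y = 1"
    and hbar_push: "distr (density lborel (\<lambda>z. ennreal (prod_dens nu z))) lborel hbar
                   = density lborel (\<lambda>z. ennreal (prod_dens nu z))"
  shows "(AE y in density lborel (\<lambda>y. ennreal (p (main_coords e y) * aux_dens nu e y)).
            rj_accept (pmf P k * p (main_coords e y)) (pmf P k' * p' (fwd_map e T U' T' hbar y))
                      (pmf (J k) k') (pmf (J k') k) (aux_dens nu e y) 1
                      (abs_jac (fwd_map e T U' T' hbar) y)
            = min 1 (pmf P k' / pmf P k * (pmf (J k') k / pmf (J k) k')))
       \<and> (CARD('n) < CARD('m) \<longrightarrow>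
          (AE th' in density lborel (\<lambda>x. ennreal (p' x)).
            rj_accept (pmf P k' * p' th') (pmf P k * p (main_coords e (rev_map e U T T' hbar th')))
                      (pmf (J k') k) (pmf (J k) k') 1 (aux_dens nu e (rev_map e U T T' hbar th'))
                      (abs_jac (rev_map e U T T' hbar) th')
            = min 1 (pmf P k / pmf P k' * (pmf (J k) k' / pmf (J k') k))))"
proof -
  interpret rj_transport nu p p' T U V T' U' V' hbar e
    by (rule rj_transport.intro) (fact assms)+
  show ?thesis
    using fwd_map_accept rev_map_accept by blast
qed

end
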